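(* Let $\ell \geq 3$ be an integer. Let $A=(a_{ij})_{1\le i\le \ell,\,1\le j\le 2}$ and $B=(b_{ij})_{1\le i\le \ell,\,1\le j\le 2}$ be $\ell\times 2$ real matrices all of whose entries are non-zero, with $\operatorname{rank} A = \operatorname{rank} B = 2$. Then there exist proper algebraic subsets $\Sigma_A, \Sigma_B \subset (\mathbb{R}^2)^\ell$ such that for every $p\in (\mathbb{R}^2)^\ell\setminus \Sigma_A$ and every $q\in(\mathbb{R}^2)^\ell\setminus\Sigma_B$, the mapping $G_{(p,A)}$ is $\mathcal{A}$-equivalent to the mapping $G_{(q,B)}$.
   Context: For a point $p=(p_1,\dots,p_\ell)\in(\mathbb{R}^2)^\ell$ with $p_i=(p_{i1},p_{i2})$ and an $\ell\times 2$ matrix $A=(a_{ij})$ with non-zero entries, the generalized distance-squared mapping $G_{(p,A)}:\mathbb{R}^2\to\mathbb{R}^\ell$ is $G_{(p,A)}(x_1,x_2)=\big(\sum_{j=1}^2 a_{1j}(x_j-p_{1j})^2,\ \dots,\ \sum_{j=1}^2 a_{\ell j}(x_j-p_{\ell j})^2\big)$. Two smooth maps $f,g:\mathbb{R}^2\to\mathbb{R}^\ell$ are $\mathcal{A}$-equivalent if there are ($C^\infty$) diffeomorphisms $h:\mathbb{R}^2\to\mathbb{R}^2$ and $H:\mathbb{R}^\ell\to\mathbb{R}^\ell$ with $f=H\circ g\circ h^{-1}$. *)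

theory Defs
  imports "HOL-Analysis.Analysis"
begin

fun smooth_k :: "nat \<Rightarrow> ('a::euclidean_space \<Rightarrow> 'b::euclidean_space) \<Rightarrow> bool" where
  "smooth_k 0 f = continuous_on UNIV f"
| "smooth_k (Suc k) f =
     ((\<forall>x. f differentiable (at x)) \<and>
      (\<forall>v. smooth_k k (\<lambda>x. frechet_derivative f (at x) v)))"

definition smooth :: "('a::euclidean_space \<Rightarrow> 'b::euclidean_space) \<Rightarrow> bool" where
  "smooth f \<longleftrightarrow> (\<forall>k. smooth_k k f)"

definition diffeomorphism :: "('a::euclidean_space \<Rightarrow> 'a) \<Rightarrow> bool" where
  "diffeomorphism h \<longleftrightarrow> bij h \<and> smooth h \<and> smooth (inv h)"

definition A_equivalent ::
  "('a::euclidean_space \<Rightarrow> 'b::euclidean_space) \<Rightarrow> ('a \<Rightarrow> 'b) \<Rightarrow> bool" where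
  "A_equivalent f g \<longleftrightarrow>
     (\<exists>h H. diffeomorphism h \<and> diffeomorphism H \<and> f = H \<circ> g \<circ> inv h)"

inductive_set poly_funs :: "('a::euclidean_space \<Rightarrow> real) set" where
  const: "(\<lambda>x. c) \<in> poly_funs"
| coord: "b \<in> Basis \<Longrightarrow> (\<lambda>x. x \<bullet> b) \<in> poly_funs"
| add: "f \<in> poly_funs \<Longrightarrow> g \<in> poly_funs \<Longrightarrow> (\<lambda>x. f x + g x) \<in> poly_funs"
| mult: "f \<in> poly_funs \<Longrightarrow> g \<in> poly_funs \<Longrightarrow> (\<lambda>x. f x * g x) \<in> poly_funs"

definition algebraic_set :: "'a::euclidean_space set \<Rightarrow> bool" where
  "algebraic_set S \<longleftrightarrow>
     (\<exists>F. finite F \<and> F \<subseteq> poly_funs \<and> S = {x. \<forall>f\<in>F. f x = 0})"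

definition proper_algebraic_set :: "'a::euclidean_space set \<Rightarrow> bool" where
  "proper_algebraic_set S \<longleftrightarrow> algebraic_set S \<and> S \<noteq> UNIV"

definition G :: "real^2^'l \<Rightarrow> real^2^'l \<Rightarrow> real^2 \<Rightarrow> real^'l" where
  "G p A x = (\<chi> i. \<Sum>j\<in>UNIV. A$i$j * (x$j - p$i$j)^2)"

end

theory Submission
  imports Defs "HOL-Combinatorics.Transposition"
begin

text \<open>Every coordinate change used is polynomial with polynomial inverse, hence a diffeomorphism.
  Choose rows \<open>i\<^sub>1, i\<^sub>2\<close> of \<open>A\<close> with non-zero \<open>2 \<times> 2\<close> minor. Subtracting combinations of
  the components \<open>i\<^sub>1, i\<^sub>2\<close> of \<open>G\<close> from the others removes their quadratic terms, and
  inverting the minor turns components \<open>i\<^sub>1, i\<^sub>2\<close> into \<open>x\<^sub>1\<^sup>2 + \<dots>\<close> and \<open>x\<^sub>2\<^sup>2 + \<dots>\<close>;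
  every other component \<open>j\<close> becomes a linear form \<open>\<alpha>\<^sub>j x\<^sub>1 + \<beta>\<^sub>j x\<^sub>2\<close> whose coefficients are
  polynomials in \<open>p\<close>. For \<open>l = 3\<close> and \<open>\<alpha>\<^sub>k \<beta>\<^sub>k \<noteq> 0\<close>, an affine substitution completing both
  squares followed by triangular changes of the target gives the cross cap
  \<open>(x\<^sub>1, x\<^sub>2\<^sup>2, x\<^sub>1 x\<^sub>2)\<close>. For \<open>l \<ge> 4\<close>, two independent linear forms can serve as source
  coordinates; the map is then a graph, equivalent to the embedding \<open>(x\<^sub>1, x\<^sub>2, 0, \<dots>, 0)\<close>.
  The exceptional \<open>p\<close> form the zero set of a polynomial, which is non-zero at a configuration
  with one or two non-zero points because all entries of \<open>A\<close> are non-zero.\<close>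

section \<open>Polynomial maps\<close>

lemma poly_funs_vec_nth: "(\<lambda>x::real^'n. x $ i) \<in> poly_funs"
proof -
  have "(\<lambda>x::real^'n. x \<bullet> axis i 1) \<in> poly_funs" by (rule poly_funs.coord) simp
  then show ?thesis by (simp add: inner_axis)
qed

lemma poly_funs_vec_nth_nth: "(\<lambda>x::real^'m^'n. x $ i $ j) \<in> poly_funs"
proof -
  have "(\<lambda>x::real^'m^'n. x \<bullet> axis i (axis j 1)) \<in> poly_funs" by (rule poly_funs.coord) simp
  then show ?thesis by (simp add: inner_axis)
qed

lemma poly_funs_diff:
  assumes "f \<in> poly_funs" and "g \<in> poly_funs"
  shows "(\<lambda>x. f x - g x) \<in> poly_funs"
proof -
  have "(\<lambda>x. f x + (-1) * g x) \<in> poly_funs"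
    by (intro poly_funs.add poly_funs.mult assms poly_funs.const)
  then show ?thesis by simp
qed

lemma poly_funs_uminus: "f \<in> poly_funs \<Longrightarrow> (\<lambda>x. - f x) \<in> poly_funs"
  using poly_funs_diff[OF poly_funs.const, of f 0] by simp

lemma poly_funs_power2: "f \<in> poly_funs \<Longrightarrow> (\<lambda>x. (f x)\<^sup>2) \<in> poly_funs"
  using poly_funs.mult[of f f] by (simp add: power2_eq_square)

lemma poly_funs_if:
  "f \<in> poly_funs \<Longrightarrow> g \<in> poly_funs \<Longrightarrow> (\<lambda>x. if P then f x else g x) \<in> poly_funs"
  by (cases P) auto

lemmas poly_funs_intros = poly_funs_if poly_funs.const poly_funs_vec_nth poly_funs_vec_nth_nth
  poly_funs.add poly_funs.mult poly_funs_diff poly_funs_power2 poly_funs_uminus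

lemma poly_funs_has_derivative:
  fixes g :: "'a::euclidean_space \<Rightarrow> real"
  assumes "g \<in> poly_funs"
  shows "\<exists>g'. (\<forall>x. (g has_derivative g' x) (at x)) \<and> (\<forall>v. (\<lambda>x. g' x v) \<in> poly_funs)"
  using assms
proof induction
  case (const c)
  show ?case by (rule exI[of _ "\<lambda>x v. 0"]) (auto intro: poly_funs.const)
next
  case (coord b)
  show ?case by (rule exI[of _ "\<lambda>x v. v \<bullet> b"]) (auto intro: poly_funs.const derivative_eq_intros)
next
  case (add f g)
  then obtain f' g' where "\<forall>x. (f has_derivative f' x) (at x)" "\<forall>v. (\<lambda>x. f' x v) \<in> poly_funs"
    and "\<forall>x. (g has_derivative g' x) (at x)" "\<forall>v. (\<lambda>x. g' x v) \<in> poly_funs" by blast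
  then show ?case
    by (intro exI[of _ "\<lambda>x v. f' x v + g' x v"]) (auto intro: poly_funs.add has_derivative_add)
next
  case (mult f g)
  then obtain f' g' where f': "\<forall>x. (f has_derivative f' x) (at x)" "\<forall>v. (\<lambda>x. f' x v) \<in> poly_funs"
    and g': "\<forall>x. (g has_derivative g' x) (at x)" "\<forall>v. (\<lambda>x. g' x v) \<in> poly_funs" by blast
  have "(\<lambda>x. f x * g' x v + f' x v * g x) \<in> poly_funs" for v
    by (intro poly_funs.add poly_funs.mult mult.hyps f'(2)[rule_format] g'(2)[rule_format])
  with f'(1) g'(1) show ?case
    by (intro exI[of _ "\<lambda>x v. f x * g' x v + f' x v * g x"]) (blast intro: has_derivative_mult)
qed

lemma poly_funs_compose:
  fixes g :: "'b::euclidean_space \<Rightarrow> real" and h :: "'a::euclidean_space \<Rightarrow> 'b"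
  assumes "g \<in> poly_funs" and "\<forall>b\<in>Basis. (\<lambda>x. h x \<bullet> b) \<in> poly_funs"
  shows "(\<lambda>x. g (h x)) \<in> poly_funs"
  using assms(1)
proof induction
  case (const c) show ?case by (rule poly_funs.const)
next
  case (coord b) then show ?case using assms(2) by auto
next
  case (add f g) then show ?case using poly_funs.add[of "\<lambda>x. f (h x)" "\<lambda>x. g (h x)"] by simp
next
  case (mult f g) then show ?case using poly_funs.mult[of "\<lambda>x. f (h x)" "\<lambda>x. g (h x)"] by simp
qed

definition poly_map :: "('a::euclidean_space \<Rightarrow> 'b::euclidean_space) \<Rightarrow> bool" where
  "poly_map f \<longleftrightarrow> (\<forall>b\<in>Basis. (\<lambda>x. f x \<bullet> b) \<in> poly_funs)"

lemma poly_map_vec_iff: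
  "poly_map (f :: 'a::euclidean_space \<Rightarrow> real^'n) \<longleftrightarrow> (\<forall>i. (\<lambda>x. f x $ i) \<in> poly_funs)"
  by (auto simp: poly_map_def Basis_vec_def inner_axis)

lemma poly_map_compose: "poly_map g \<Longrightarrow> poly_map h \<Longrightarrow> poly_map (\<lambda>x. g (h x))"
  unfolding poly_map_def using poly_funs_compose by blast

lemma poly_map_id: "poly_map (\<lambda>x. x)"
  unfolding poly_map_def by (auto intro: poly_funs.coord)

lemma poly_map_has_derivative:
  fixes f :: "'a::euclidean_space \<Rightarrow> 'b::euclidean_space"
  assumes "poly_map f"
  shows "\<exists>f'. (\<forall>x. (f has_derivative f' x) (at x)) \<and> (\<forall>v. poly_map (\<lambda>x. f' x v))"
proof -
  have "\<forall>b\<in>Basis. \<exists>g'. (\<forall>x. ((\<lambda>x. f x \<bullet> b) has_derivative g' x) (at x)) \<and>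
      (\<forall>v. (\<lambda>x. g' x v) \<in> poly_funs)"
    using assms poly_funs_has_derivative unfolding poly_map_def by blast
  then obtain D where D: "\<And>b x. b \<in> Basis \<Longrightarrow> ((\<lambda>x. f x \<bullet> b) has_derivative D b x) (at x)"
    and D_poly: "\<And>b v. b \<in> Basis \<Longrightarrow> (\<lambda>x. D b x v) \<in> poly_funs"
    by metis
  define f' where "f' x v = (\<Sum>b\<in>Basis. D b x v *\<^sub>R b)" for x v
  have "((\<lambda>x. \<Sum>b\<in>Basis. (f x \<bullet> b) *\<^sub>R b) has_derivative f' x) (at x)" for x
    unfolding f'_def
    by (rule has_derivative_sum) (rule has_derivative_scaleR_left[OF D])
  then have "(f has_derivative f' x) (at x)" for x
    by (simp add: euclidean_representation)
  moreover have "f' x v \<bullet> b = D b x v" if "b \<in> Basis" for x v b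
    using that by (simp add: f'_def inner_sum_left inner_Basis if_distrib cong: if_cong)
  then have "poly_map (\<lambda>x. f' x v)" for v
    unfolding poly_map_def using D_poly by simp
  ultimately show ?thesis by blast
qed

lemma poly_map_smooth_k: "poly_map f \<Longrightarrow> smooth_k k f"
proof (induction k arbitrary: f)
  case 0
  then obtain f' where "\<forall>x. (f has_derivative f' x) (at x)" using poly_map_has_derivative by blast
  then have "f differentiable_on UNIV" unfolding differentiable_on_def differentiable_def by blast
  then show ?case by (simp add: differentiable_imp_continuous_on)
next
  case (Suc k)
  then obtain f' where f': "\<forall>x. (f has_derivative f' x) (at x)" "\<forall>v. poly_map (\<lambda>x. f' x v)"
    using poly_map_has_derivative by blast
  then have "frechet_derivative f (at x) = f' x" for x using frechet_derivative_at by metis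
  with f' Suc.IH show ?case by (auto simp: differentiable_def)
qed

lemma poly_map_smooth: "poly_map f \<Longrightarrow> smooth f"
  unfolding smooth_def using poly_map_smooth_k by blast

section \<open>Polynomial equivalence\<close>

definition poly_automorphism :: "('a::euclidean_space \<Rightarrow> 'a) \<Rightarrow> bool" where
  "poly_automorphism h \<longleftrightarrow>
     poly_map h \<and> (\<exists>g. poly_map g \<and> (\<forall>x. g (h x) = x) \<and> (\<forall>y. h (g y) = y))"

lemma poly_automorphismI:
  "poly_map h \<Longrightarrow> poly_map g \<Longrightarrow> (\<And>x. g (h x) = x) \<Longrightarrow> (\<And>y. h (g y) = y) \<Longrightarrow>
    poly_automorphism h"
  unfolding poly_automorphism_def by blast

lemma poly_automorphism_bij: "poly_automorphism h \<Longrightarrow> bij h"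
  unfolding poly_automorphism_def by (auto intro: o_bij[of _ h] simp: fun_eq_iff)

lemma poly_automorphism_inv:
  assumes "poly_automorphism h"
  shows "poly_automorphism (inv h)"
proof -
  obtain g where g: "poly_map h" "poly_map g" "\<And>x. g (h x) = x" "\<And>y. h (g y) = y"
    using assms unfolding poly_automorphism_def by blast
  have "inv h = g" by (rule inv_unique_comp) (simp_all add: fun_eq_iff g)
  with g show ?thesis using poly_automorphismI[of g h] by simp
qed

lemma poly_automorphism_diffeomorphism: "poly_automorphism h \<Longrightarrow> diffeomorphism h"
  using poly_automorphism_bij poly_automorphism_inv[of h] poly_map_smooth
  unfolding diffeomorphism_def poly_automorphism_def by blast

lemma poly_automorphism_id: "poly_automorphism (\<lambda>x. x)"
  by (rule poly_automorphismI[OF poly_map_id poly_map_id]) auto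

lemma poly_automorphism_compose:
  assumes "poly_automorphism f" and "poly_automorphism g"
  shows "poly_automorphism (\<lambda>x. f (g x))"
proof -
  obtain f' where f: "poly_map f" "poly_map f'" "\<forall>x. f' (f x) = x" "\<forall>y. f (f' y) = y"
    using assms(1) unfolding poly_automorphism_def by blast
  obtain g' where g: "poly_map g" "poly_map g'" "\<forall>x. g' (g x) = x" "\<forall>y. g (g' y) = y"
    using assms(2) unfolding poly_automorphism_def by blast
  show ?thesis
    by (rule poly_automorphismI[where g="\<lambda>y. g' (f' y)"]) (use f g poly_map_compose in auto)
qed

definition poly_equivalent ::
  "('a::euclidean_space \<Rightarrow> 'b::euclidean_space) \<Rightarrow> ('a \<Rightarrow> 'b) \<Rightarrow> bool" where
  "poly_equivalent f g \<longleftrightarrow>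
     (\<exists>h H. poly_automorphism h \<and> poly_automorphism H \<and> (\<forall>x. f x = H (g (h x))))"

lemma poly_equivalent_imp_A_equivalent:
  assumes "poly_equivalent f g"
  shows "A_equivalent f g"
proof -
  obtain h H where h: "poly_automorphism h" and H: "poly_automorphism H"
    and f: "\<And>x. f x = H (g (h x))"
    using assms unfolding poly_equivalent_def by blast
  have "f = H \<circ> g \<circ> inv (inv h)"
    by (simp add: inv_inv_eq[OF poly_automorphism_bij[OF h]] fun_eq_iff f)
  moreover have "diffeomorphism (inv h)" "diffeomorphism H"
    using h H by (simp_all add: poly_automorphism_diffeomorphism poly_automorphism_inv)
  ultimately show ?thesis
    unfolding A_equivalent_def by blast
qed

lemma poly_equivalent_sym:
  assumes "poly_equivalent f g"
  shows "poly_equivalent g f"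
proof -
  obtain h H where h: "poly_automorphism h" and H: "poly_automorphism H"
    and f: "\<And>x. f x = H (g (h x))"
    using assms unfolding poly_equivalent_def by blast
  have "g x = inv H (f (inv h x))" for x
  proof -
    have "f (inv h x) = H (g x)"
      using f surj_f_inv_f[OF bij_is_surj[OF poly_automorphism_bij[OF h]]] by simp
    then show ?thesis
      using inv_f_f[OF bij_is_inj[OF poly_automorphism_bij[OF H]]] by simp
  qed
  then show ?thesis
    unfolding poly_equivalent_def
    by (intro exI[of _ "inv h"] exI[of _ "inv H"]) (simp add: h H poly_automorphism_inv)
qed

lemma poly_equivalent_trans [trans]:
  assumes "poly_equivalent f g" and "poly_equivalent g k"
  shows "poly_equivalent f k"
proof -
  obtain h H where h: "poly_automorphism h" "poly_automorphism H" "\<And>x. f x = H (g (h x))"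
    using assms(1) unfolding poly_equivalent_def by blast
  obtain h' H' where h': "poly_automorphism h'" "poly_automorphism H'" "\<And>x. g x = H' (k (h' x))"
    using assms(2) unfolding poly_equivalent_def by blast
  show ?thesis
    unfolding poly_equivalent_def
    by (intro exI[of _ "\<lambda>x. h' (h x)"] exI[of _ "\<lambda>x. H (H' x)"])
       (simp add: h h' poly_automorphism_compose)
qed

lemma poly_equivalent_target:
  assumes "poly_automorphism H" and "\<And>x. H (f x) = g x"
  shows "poly_equivalent f g"
proof -
  have "poly_equivalent g f"
    unfolding poly_equivalent_def
    by (rule exI[of _ "\<lambda>x. x"], rule exI[of _ H]) (simp add: assms poly_automorphism_id)
  then show ?thesis by (rule poly_equivalent_sym)
qed

lemma poly_equivalent_source:
  assumes "poly_automorphism h" and "\<And>x. f (h x) = g x"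
  shows "poly_equivalent f g"
proof -
  have "poly_equivalent g f"
    unfolding poly_equivalent_def
    by (rule exI[of _ h], rule exI[of _ "\<lambda>x. x"]) (simp add: assms poly_automorphism_id)
  then show ?thesis by (rule poly_equivalent_sym)
qed

lemma poly_automorphism_shear:
  fixes \<phi> :: "real^'n \<Rightarrow> real^'n"
  assumes "poly_map \<phi>" and "\<And>y j. j \<notin> S \<Longrightarrow> \<phi> y $ j = 0"
    and "\<And>y y'. (\<And>j. j \<notin> S \<Longrightarrow> y $ j = y' $ j) \<Longrightarrow> \<phi> y = \<phi> y'"
  shows "poly_automorphism (\<lambda>y. y + \<phi> y)"
proof (rule poly_automorphismI[where g="\<lambda>y. y - \<phi> y"])
  show "poly_map (\<lambda>y. y + \<phi> y)" "poly_map (\<lambda>y. y - \<phi> y)"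
    using assms(1) unfolding poly_map_vec_iff by (auto intro: poly_funs_intros)
  fix x
  have "\<phi> (x + \<phi> x) = \<phi> x" "\<phi> (x - \<phi> x) = \<phi> x" by (rule assms(3), simp add: assms(2))+
  then show "x + \<phi> x - \<phi> (x + \<phi> x) = x" "x - \<phi> x + \<phi> (x - \<phi> x) = x" by simp_all
qed

definition coord_pair_linear ::
  "'n \<Rightarrow> 'n \<Rightarrow> real \<Rightarrow> real \<Rightarrow> real \<Rightarrow> real \<Rightarrow> real^'n \<Rightarrow> real^'n" where
  "coord_pair_linear i1 i2 m11 m12 m21 m22 y = (\<chi> j. if j = i1 then m11 * y$i1 + m12 * y$i2
      else if j = i2 then m21 * y$i1 + m22 * y$i2 else y$j)"

lemma poly_map_coord_pair_linear: "poly_map (coord_pair_linear i1 i2 m11 m12 m21 m22)"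
  unfolding poly_map_vec_iff coord_pair_linear_def by (auto intro!: poly_funs_intros)

lemma poly_automorphism_coord_pair_linear:
  assumes "i1 \<noteq> i2" and "m11 * m22 - m12 * m21 \<noteq> 0"
  shows "poly_automorphism (coord_pair_linear i1 i2 m11 m12 m21 m22)"
proof -
  define d where "d = m11 * m22 - m12 * m21"
  have d: "d \<noteq> 0" using assms d_def by simp
  let ?inv = "coord_pair_linear i1 i2 (m22/d) (-m12/d) (-m21/d) (m11/d)"
  show ?thesis
  proof (rule poly_automorphismI[OF poly_map_coord_pair_linear poly_map_coord_pair_linear])
    fix x
    show "?inv (coord_pair_linear i1 i2 m11 m12 m21 m22 x) = x"
         "coord_pair_linear i1 i2 m11 m12 m21 m22 (?inv x) = x"
      using assms(1) d unfolding coord_pair_linear_def vec_eq_iff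
      by (auto simp: field_simps) (simp_all add: d_def algebra_simps)
  qed
qed

definition plane_affine ::
  "real \<Rightarrow> real \<Rightarrow> real \<Rightarrow> real \<Rightarrow> real \<Rightarrow> real \<Rightarrow> real^2 \<Rightarrow> real^2" where
  "plane_affine c11 c12 c21 c22 d1 d2 z =
     vector [c11 * z$1 + c12 * z$2 + d1, c21 * z$1 + c22 * z$2 + d2]"

lemma plane_affine_nth [simp]:
  "plane_affine c11 c12 c21 c22 d1 d2 z $ 1 = c11 * z$1 + c12 * z$2 + d1"
  "plane_affine c11 c12 c21 c22 d1 d2 z $ 2 = c21 * z$1 + c22 * z$2 + d2"
  by (simp_all add: plane_affine_def)

lemma poly_map_plane_affine: "poly_map (plane_affine c11 c12 c21 c22 d1 d2)"
  unfolding poly_map_vec_iff forall_2 by (auto intro!: poly_funs_intros)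

lemma poly_automorphism_plane_affine:
  assumes "c11 * c22 - c12 * c21 \<noteq> 0"
  shows "poly_automorphism (plane_affine c11 c12 c21 c22 d1 d2)"
proof -
  define d where "d = c11 * c22 - c12 * c21"
  have d: "d \<noteq> 0" using assms d_def by simp
  let ?inv = "plane_affine (c22/d) (-c12/d) (-c21/d) (c11/d)
                (-(c22*d1 - c12*d2)/d) (-(c11*d2 - c21*d1)/d)"
  show ?thesis
  proof (rule poly_automorphismI[OF poly_map_plane_affine poly_map_plane_affine])
    fix x
    show "?inv (plane_affine c11 c12 c21 c22 d1 d2 x) = x"
         "plane_affine c11 c12 c21 c22 d1 d2 (?inv x) = x"
      using d unfolding vec_eq_iff forall_2
      by (simp_all add: field_simps) (simp_all add: d_def algebra_simps)
  qed
qed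

lemma poly_automorphism_transpose_coords:
  "poly_automorphism (\<lambda>y::real^'n. \<chi> i. y $ Transposition.transpose a b i)"
  by (rule poly_automorphismI[where g="\<lambda>y. \<chi> i. y $ Transposition.transpose a b i"])
     (auto simp: poly_map_vec_iff poly_funs_vec_nth)

section \<open>Normal forms of maps from the plane\<close>

definition three_component_map :: "'n \<Rightarrow> 'n \<Rightarrow> 'n \<Rightarrow>
    (real^2 \<Rightarrow> real) \<Rightarrow> (real^2 \<Rightarrow> real) \<Rightarrow> (real^2 \<Rightarrow> real) \<Rightarrow> real^2 \<Rightarrow> real^'n" where
  "three_component_map c1 c2 c3 f1 f2 f3 z =
     (\<chi> i. if i = c1 then f1 z else if i = c2 then f2 z else if i = c3 then f3 z else 0)"

abbreviation cross_cap :: "'n \<Rightarrow> 'n \<Rightarrow> 'n \<Rightarrow> real^2 \<Rightarrow> real^'n" where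
  "cross_cap c1 c2 c3 \<equiv> three_component_map c1 c2 c3 (\<lambda>z. z$1) (\<lambda>z. (z$2)\<^sup>2) (\<lambda>z. z$1 * z$2)"

abbreviation plane_embedding :: "'n \<Rightarrow> 'n \<Rightarrow> 'n \<Rightarrow> real^2 \<Rightarrow> real^'n" where
  "plane_embedding c1 c2 c3 \<equiv> three_component_map c1 c2 c3 (\<lambda>z. z$1) (\<lambda>z. z$2) (\<lambda>z. 0)"

lemma three_component_map_transpose:
  "poly_equivalent (three_component_map c1 c2 c3 f1 f2 f3)
     (three_component_map (Transposition.transpose a b c1) (Transposition.transpose a b c2)
        (Transposition.transpose a b c3) f1 f2 f3)"
proof (rule poly_equivalent_target[OF poly_automorphism_transpose_coords])
  have "Transposition.transpose a b i = c \<longleftrightarrow> i = Transposition.transpose a b c" for i c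
    by (metis transpose_involutory)
  then show "(\<chi> i. three_component_map c1 c2 c3 f1 f2 f3 z $ Transposition.transpose a b i) =
      three_component_map (Transposition.transpose a b c1) (Transposition.transpose a b c2)
        (Transposition.transpose a b c3) f1 f2 f3 z" for z
    by (auto simp: three_component_map_def vec_eq_iff)
qed

lemma three_component_map_relabel:
  assumes "distinct [c1, c2, c3]" and "distinct [e1, e2, e3]"
  shows "poly_equivalent (three_component_map c1 c2 c3 f1 f2 f3)
           (three_component_map e1 e2 e3 f1 f2 f3)"
proof -
  define c2' c3' where "c2' = Transposition.transpose c1 e1 c2"
    and "c3' = Transposition.transpose c1 e1 c3"
  define c3'' where "c3'' = Transposition.transpose c2' e2 c3'"
  have c': "c2' \<noteq> e1" "c3' \<noteq> e1" "c2' \<noteq> c3'" and c'': "c3'' \<noteq> e1" "c3'' \<noteq> e2"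
    using assms unfolding c2'_def c3'_def c3''_def Transposition.transpose_def by auto
  have "poly_equivalent (three_component_map c1 c2 c3 f1 f2 f3)
          (three_component_map e1 c2' c3' f1 f2 f3)"
    using three_component_map_transpose[of c1 c2 c3 f1 f2 f3 c1 e1]
    unfolding c2'_def c3'_def by simp
  also have "poly_equivalent \<dots> (three_component_map e1 e2 c3'' f1 f2 f3)"
    using three_component_map_transpose[of e1 c2' c3' f1 f2 f3 c2' e2] assms c'
    unfolding c3''_def by (simp add: Transposition.transpose_def)
  also have "poly_equivalent \<dots> (three_component_map e1 e2 e3 f1 f2 f3)"
    using three_component_map_transpose[of e1 e2 c3'' f1 f2 f3 c3'' e3] assms c''
    by (simp add: Transposition.transpose_def)
  finally show ?thesis .
qed

definition quad_lin_map ::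
  "'n \<Rightarrow> 'n \<Rightarrow> (real^2 \<Rightarrow> real) \<Rightarrow> (real^2 \<Rightarrow> real) \<Rightarrow> ('n \<Rightarrow> real) \<Rightarrow> ('n \<Rightarrow> real) \<Rightarrow>
     real^2 \<Rightarrow> real^'n" where
  "quad_lin_map i1 i2 Q1 Q2 \<alpha> \<beta> x =
     (\<chi> j. if j = i1 then Q1 x else if j = i2 then Q2 x else \<alpha> j * x$1 + \<beta> j * x$2)"

text \<open>A map whose components \<open>k, k'\<close> are the two source coordinates is the graph of a
  polynomial map; subtracting that map, composed with the projection to \<open>(y$k, y$k')\<close>, is a shear.\<close>

lemma poly_equivalent_graph:
  fixes F :: "real^2 \<Rightarrow> real^'n"
  assumes F: "poly_map F" and "k \<noteq> k'" and c: "c \<noteq> k" "c \<noteq> k'"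
    and Fk: "\<And>z. F z $ k = z$1" and Fk': "\<And>z. F z $ k' = z$2"
  shows "poly_equivalent F (plane_embedding k k' c)"
proof -
  define N :: "real^2 \<Rightarrow> real^'n" where "N = plane_embedding k k' c"
  define pr :: "real^'n \<Rightarrow> real^2" where "pr y = vector [y$k, y$k']" for y
  define \<phi> where "\<phi> y = N (pr y) - F (pr y)" for y
  have "poly_map pr" unfolding poly_map_vec_iff forall_2 pr_def by (simp add: poly_funs_vec_nth)
  moreover have "poly_map N" unfolding poly_map_vec_iff N_def three_component_map_def
    by (auto intro!: poly_funs_intros)
  ultimately have "poly_map (\<lambda>y. N (pr y))" "poly_map (\<lambda>y. F (pr y))"
    using poly_map_compose F by blast+
  then have "poly_map \<phi>" unfolding poly_map_vec_iff \<phi>_def by (auto intro!: poly_funs_diff)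
  have Nk: "N z $ k = z$1" "N z $ k' = z$2" for z
    unfolding N_def three_component_map_def using \<open>k \<noteq> k'\<close> by auto
  have shear: "poly_automorphism (\<lambda>y. y + \<phi> y)"
  proof (rule poly_automorphism_shear[where S="-{k,k'}", OF \<open>poly_map \<phi>\<close>])
    show "\<And>y j. j \<notin> - {k, k'} \<Longrightarrow> \<phi> y $ j = 0" unfolding \<phi>_def using Nk Fk Fk' by auto
    fix y y' :: "real^'n" assume "\<And>j. j \<notin> - {k, k'} \<Longrightarrow> y $ j = y' $ j"
    then have "pr y = pr y'" unfolding pr_def by auto
    then show "\<phi> y = \<phi> y'" unfolding \<phi>_def by simp
  qed
  have "pr (F z) = z" for z unfolding pr_def vec_eq_iff forall_2 using Fk Fk' by simp
  then have "poly_equivalent F N" by (intro poly_equivalent_target[OF shear]) (simp add: \<phi>_def)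
  then show ?thesis unfolding N_def .
qed

lemma quad_lin_map_embedding:
  fixes \<alpha> \<beta> :: "'n::finite \<Rightarrow> real"
  assumes Q: "Q1 \<in> poly_funs" "Q2 \<in> poly_funs" and dist: "distinct [i1, i2, k, k']"
    and det: "\<alpha> k * \<beta> k' - \<beta> k * \<alpha> k' \<noteq> 0"
  shows "poly_equivalent (quad_lin_map i1 i2 Q1 Q2 \<alpha> \<beta>) (plane_embedding k k' i1)"
proof -
  have idx: "k \<noteq> i1" "k \<noteq> i2" "k' \<noteq> i1" "k' \<noteq> i2" "k \<noteq> k'" using dist by auto
  define d where "d = \<alpha> k * \<beta> k' - \<beta> k * \<alpha> k'"
  have d: "d \<noteq> 0" using det d_def by simp
  define \<psi> where "\<psi> = plane_affine (\<beta> k' / d) (- \<beta> k / d) (- \<alpha> k' / d) (\<alpha> k / d) 0 0"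
  let ?F = "quad_lin_map i1 i2 Q1 Q2 \<alpha> \<beta>"
  have "\<beta> k' / d * (\<alpha> k / d) - - \<beta> k / d * (- \<alpha> k' / d) = 1 / d"
    using d by (simp add: field_simps power2_eq_square) (simp add: d_def algebra_simps)
  then have \<psi>: "poly_automorphism \<psi>"
    unfolding \<psi>_def using d by (intro poly_automorphism_plane_affine) simp
  then have "poly_equivalent ?F (\<lambda>z. ?F (\<psi> z))" by (rule poly_equivalent_source) simp
  also have "poly_equivalent \<dots> (plane_embedding k k' i1)"
  proof (rule poly_equivalent_graph)
    have "poly_map ?F" unfolding poly_map_vec_iff quad_lin_map_def using Q
      by (auto intro!: poly_funs_intros)
    then show "poly_map (\<lambda>z. ?F (\<psi> z))"
      using poly_map_compose \<psi> unfolding poly_automorphism_def by blast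
    show "?F (\<psi> z) $ k = z$1" "?F (\<psi> z) $ k' = z$2" for z
      using idx d unfolding quad_lin_map_def \<psi>_def
      by (simp_all add: field_simps) (simp_all add: d_def algebra_simps)
  qed (use dist in auto)
  finally show ?thesis .
qed

lemma cross_cap_normal_form:
  fixes i1 i2 k :: "'n::finite"
  assumes dist: "distinct [i1, i2, k]" and U: "UNIV = {i1, i2, k}" and "al \<noteq> 0" "be \<noteq> 0"
  shows "poly_equivalent
     (\<lambda>z. \<chi> j. if j = i1 then (z$1 + z$2)\<^sup>2 / (4 * al\<^sup>2) + a * z$1 + c1
        else if j = i2 then (z$1 - z$2)\<^sup>2 / (4 * be\<^sup>2) + b * z$1 + c2 else z$1 + c)
     (cross_cap k i2 i1)"
    (is "poly_equivalent ?F0 _")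
proof -
  have idx: "i1 \<noteq> i2" "k \<noteq> i1" "k \<noteq> i2" using dist by auto
  define sq1 sq2 where "sq1 z = (z$1 + z$2)\<^sup>2 / (4 * al\<^sup>2)"
    and "sq2 z = (z$1 - z$2)\<^sup>2 / (4 * be\<^sup>2)" for z :: "real^2"
  let ?F1 = "\<lambda>z. \<chi> j. if j = i1 then sq1 z + a * z$1 + c1 else if j = i2 then sq2 z + b * z$1 + c2
               else z$1"
  let ?F2 = "\<lambda>z. \<chi> j. if j = i1 then sq1 z else if j = i2 then sq2 z else z$1"
  let ?F3 = "\<lambda>z::real^2. \<chi> j. if j = i1 then z$1 * z$2
               else if j = i2 then (z$1)\<^sup>2 + (z$2)\<^sup>2 else z$1"
  let ?F4 = "\<lambda>z::real^2. \<chi> j. if j = i1 then z$1 * z$2 else if j = i2 then (z$2)\<^sup>2 else z$1"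
  have "poly_equivalent ?F0 ?F1"
  proof (rule poly_equivalent_target)
    show "poly_automorphism (\<lambda>y. y + (\<chi> j. if j = i1 \<or> j = i2 then 0 else - c))"
      by (rule poly_automorphism_shear[where S="-{i1,i2}"])
         (auto simp: poly_map_vec_iff poly_funs.const)
  qed (auto simp: vec_eq_iff sq1_def sq2_def)
  also have "poly_equivalent \<dots> ?F2"
  proof (rule poly_equivalent_target)
    show "poly_automorphism (\<lambda>y. y + (\<chi> j. if j = i1 then - (a * y$k + c1)
                                        else if j = i2 then - (b * y$k + c2) else 0))"
      by (rule poly_automorphism_shear[where S="{i1,i2}"])
         (auto simp: poly_map_vec_iff idx intro!: poly_funs_intros)
  qed (use idx in \<open>auto simp: vec_eq_iff\<close>)
  also have "poly_equivalent \<dots> ?F3"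
  proof (rule poly_equivalent_target)
    show "poly_automorphism (coord_pair_linear i1 i2 (al\<^sup>2) (- (be\<^sup>2)) (2 * al\<^sup>2) (2 * be\<^sup>2))"
      using idx \<open>al \<noteq> 0\<close> \<open>be \<noteq> 0\<close> by (intro poly_automorphism_coord_pair_linear) simp_all
    have "al\<^sup>2 * sq1 z - be\<^sup>2 * sq2 z = z$1 * z$2"
      and "2 * al\<^sup>2 * sq1 z + 2 * be\<^sup>2 * sq2 z = (z$1)\<^sup>2 + (z$2)\<^sup>2" for z
      using \<open>al \<noteq> 0\<close> \<open>be \<noteq> 0\<close> by (simp_all add: sq1_def sq2_def field_simps power2_eq_square)
    then show "coord_pair_linear i1 i2 (al\<^sup>2) (- (be\<^sup>2)) (2 * al\<^sup>2) (2 * be\<^sup>2) (?F2 z) = ?F3 z"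
      for z
      using idx by (simp add: coord_pair_linear_def vec_eq_iff)
  qed
  also have "poly_equivalent \<dots> ?F4"
  proof (rule poly_equivalent_target)
    show "poly_automorphism (\<lambda>y::real^'n. y + (\<chi> j. if j = i2 then - (y$k)\<^sup>2 else 0))"
      by (rule poly_automorphism_shear[where S="{i2}"])
         (auto simp: poly_map_vec_iff idx intro!: poly_funs_intros)
  qed (use idx in \<open>auto simp: vec_eq_iff\<close>)
  also have "?F4 = cross_cap k i2 i1"
    using U idx by (auto simp: three_component_map_def vec_eq_iff fun_eq_iff)
  finally show ?thesis .
qed

lemma quad_lin_map_cross_cap:
  fixes \<alpha> \<beta> :: "'n::finite \<Rightarrow> real"
  assumes dist: "distinct [i1, i2, k]" and U: "UNIV = {i1, i2, k}" and "\<alpha> k \<noteq> 0" "\<beta> k \<noteq> 0"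
  shows "poly_equivalent
     (quad_lin_map i1 i2 (\<lambda>x. (x$1)\<^sup>2 + u1 * x$1 + u2 * x$2 + c1)
        (\<lambda>x. (x$2)\<^sup>2 + v1 * x$1 + v2 * x$2 + c2) \<alpha> \<beta>)
     (cross_cap k i2 i1)"
    (is "poly_equivalent ?F _")
proof -
  define al be where "al = \<alpha> k" and "be = \<beta> k"
  have ab: "al \<noteq> 0" "be \<noteq> 0" using assms(3,4) al_def be_def by simp_all
  have \<alpha>\<beta>: "\<alpha> j = al" "\<beta> j = be" if "j \<noteq> i1" "j \<noteq> i2" for j
    using U that unfolding al_def be_def by auto
  define ta tb where "ta = (u2 * al / be - u1) / 2" and "tb = (v1 * be / al - v2) / 2"
  define E1 E2 where "E1 = ta\<^sup>2 + u1 * ta + u2 * tb + c1" and "E2 = tb\<^sup>2 + v1 * ta + v2 * tb + c2"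
  text \<open>\<open>\<psi>\<close> completes both squares and turns the linear form \<open>al x\<^sub>1 + be x\<^sub>2\<close> into the first
    coordinate up to a constant; both quadrics become \<open>(z\<^sub>1 \<plusminus> z\<^sub>2)\<^sup>2\<close> plus an affine function
    of \<open>z\<^sub>1\<close>.\<close>
  define \<psi> where
    "\<psi> = plane_affine (1 / (2 * al)) (1 / (2 * al)) (1 / (2 * be)) (- 1 / (2 * be)) ta tb"
  have "1 / (2 * al) * (- 1 / (2 * be)) - 1 / (2 * al) * (1 / (2 * be)) = - 1 / (2 * al * be)"
    using ab by (simp add: field_simps)
  then have \<psi>: "poly_automorphism \<psi>"
    unfolding \<psi>_def using ab by (intro poly_automorphism_plane_affine) simp
  let ?F' = "\<lambda>z. \<chi> j. if j = i1 then (z$1 + z$2)\<^sup>2 / (4 * al\<^sup>2) + u2 / be * z$1 + E1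
      else if j = i2 then (z$1 - z$2)\<^sup>2 / (4 * be\<^sup>2) + v1 / al * z$1 + E2
      else z$1 + (al * ta + be * tb)"
  have "?F (\<psi> z) = ?F' z" for z
  proof -
    define w1 w2 where "w1 = (z$1 + z$2) / (2 * al)" and "w2 = (z$1 - z$2) / (2 * be)"
    have \<psi>_w: "\<psi> z $ 1 = w1 + ta" "\<psi> z $ 2 = w2 + tb"
      unfolding \<psi>_def w1_def w2_def by (simp_all add: add_divide_distrib diff_divide_distrib)
    have lin: "al * w1 + be * w2 = z$1" unfolding w1_def w2_def using ab by (simp add: field_simps)
    have sq: "w1\<^sup>2 = (z$1 + z$2)\<^sup>2 / (4 * al\<^sup>2)" "w2\<^sup>2 = (z$1 - z$2)\<^sup>2 / (4 * be\<^sup>2)"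
      unfolding w1_def w2_def by (simp_all add: power_divide power_mult_distrib)
    have "(w1 + ta)\<^sup>2 + u1 * (w1 + ta) + u2 * (w2 + tb) + c1
        = w1\<^sup>2 + u2 / be * (al * w1 + be * w2) + E1"
      using ab unfolding E1_def ta_def by (simp add: field_simps power2_eq_square)
    moreover have "(w2 + tb)\<^sup>2 + v1 * (w1 + ta) + v2 * (w2 + tb) + c2
        = w2\<^sup>2 + v1 / al * (al * w1 + be * w2) + E2"
      using ab unfolding E2_def tb_def by (simp add: field_simps power2_eq_square)
    moreover have "al * (w1 + ta) + be * (w2 + tb) = (al * w1 + be * w2) + (al * ta + be * tb)"
      by (simp add: algebra_simps)
    ultimately show ?thesis
      unfolding quad_lin_map_def vec_eq_iff \<psi>_w lin sq by (simp add: \<alpha>\<beta>)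
  qed
  with \<psi> have "poly_equivalent ?F ?F'" by (rule poly_equivalent_source)
  also have "poly_equivalent ?F' (cross_cap k i2 i1)"
    by (rule cross_cap_normal_form[OF dist U ab])
  finally show ?thesis .
qed

section \<open>Generalized distance-squared mappings\<close>

definition G_lin :: "real^2^'l \<Rightarrow> real^2^'l \<Rightarrow> 'l \<Rightarrow> 2 \<Rightarrow> real" where
  "G_lin A p i c = - 2 * A$i$c * p$i$c"

definition G_const :: "real^2^'l \<Rightarrow> real^2^'l \<Rightarrow> 'l \<Rightarrow> real" where
  "G_const A p i = A$i$1 * (p$i$1)\<^sup>2 + A$i$2 * (p$i$2)\<^sup>2"

lemma G_nth:
  "G p A x $ i =
     A$i$1 * (x$1)\<^sup>2 + A$i$2 * (x$2)\<^sup>2 + G_lin A p i 1 * x$1 + G_lin A p i 2 * x$2 + G_const A p i"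
  by (simp add: G_def sum_2 G_lin_def G_const_def power2_eq_square algebra_simps)

definition minor2 :: "real^2^'l \<Rightarrow> 'l \<Rightarrow> 'l \<Rightarrow> real" where
  "minor2 A i1 i2 = A$i1$1 * A$i2$2 - A$i1$2 * A$i2$1"

definition row_coeff1 :: "real^2^'l \<Rightarrow> 'l \<Rightarrow> 'l \<Rightarrow> 'l \<Rightarrow> real" where
  "row_coeff1 A i1 i2 j = (A$j$1 * A$i2$2 - A$j$2 * A$i2$1) / minor2 A i1 i2"

definition row_coeff2 :: "real^2^'l \<Rightarrow> 'l \<Rightarrow> 'l \<Rightarrow> 'l \<Rightarrow> real" where
  "row_coeff2 A i1 i2 j = (A$i1$1 * A$j$2 - A$i1$2 * A$j$1) / minor2 A i1 i2"

lemma row_eq_row_coeff: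
  assumes "minor2 A i1 i2 \<noteq> 0"
  shows "A$j$c = row_coeff1 A i1 i2 j * A$i1$c + row_coeff2 A i1 i2 j * A$i2$c"
proof -
  have "A$j$1 = row_coeff1 A i1 i2 j * A$i1$1 + row_coeff2 A i1 i2 j * A$i2$1"
       "A$j$2 = row_coeff1 A i1 i2 j * A$i1$2 + row_coeff2 A i1 i2 j * A$i2$2"
    using assms unfolding row_coeff1_def row_coeff2_def
    by (simp_all add: field_simps) (simp_all add: minor2_def algebra_simps)
  then show ?thesis using exhaust_2[of c] by auto
qed

definition reduced_lin :: "real^2^'l \<Rightarrow> 'l \<Rightarrow> 'l \<Rightarrow> real^2^'l \<Rightarrow> 'l \<Rightarrow> 2 \<Rightarrow> real" where
  "reduced_lin A i1 i2 p j c =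
     G_lin A p j c - row_coeff1 A i1 i2 j * G_lin A p i1 c - row_coeff2 A i1 i2 j * G_lin A p i2 c"

lemma poly_funs_reduced_lin: "(\<lambda>p. reduced_lin A i1 i2 p j c) \<in> poly_funs"
  unfolding reduced_lin_def G_lin_def by (intro poly_funs_intros)

lemma reduced_lin_eq:
  "p$i1 = 0 \<Longrightarrow> p$i2 = 0 \<Longrightarrow> reduced_lin A i1 i2 p j c = - 2 * A$j$c * p$j$c"
  by (simp add: reduced_lin_def G_lin_def)

lemma G_poly_equivalent_reduced:
  fixes A :: "real^2^'l"
  assumes "minor2 A i1 i2 \<noteq> 0"
  shows "poly_equivalent (G p A) (\<lambda>x. \<chi> j. if j = i1 \<or> j = i2 then G p A x $ j
           else reduced_lin A i1 i2 p j 1 * x$1 + reduced_lin A i1 i2 p j 2 * x$2)"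
proof (rule poly_equivalent_target)
  let ?r1 = "row_coeff1 A i1 i2" and ?r2 = "row_coeff2 A i1 i2"
  define \<phi> :: "real^'l \<Rightarrow> real^'l" where "\<phi> y = (\<chi> j. if j = i1 \<or> j = i2 then 0 else
      - (?r1 j * y$i1 + ?r2 j * y$i2
         + (G_const A p j - ?r1 j * G_const A p i1 - ?r2 j * G_const A p i2)))" for y
  show "poly_automorphism (\<lambda>y. y + \<phi> y)"
  proof (rule poly_automorphism_shear[where S="-{i1,i2}"])
    show "poly_map \<phi>" unfolding poly_map_vec_iff \<phi>_def by (auto intro!: poly_funs_intros)
    show "\<And>y j. j \<notin> - {i1, i2} \<Longrightarrow> \<phi> y $ j = 0" unfolding \<phi>_def by auto
    fix y y' :: "real^'l" assume "\<And>j. j \<notin> - {i1, i2} \<Longrightarrow> y $ j = y' $ j"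
    then have "y$i1 = y'$i1" "y$i2 = y'$i2" by auto
    then show "\<phi> y = \<phi> y'" unfolding \<phi>_def by (simp only:)
  qed
  show "G p A x + \<phi> (G p A x) = (\<chi> j. if j = i1 \<or> j = i2 then G p A x $ j
      else reduced_lin A i1 i2 p j 1 * x$1 + reduced_lin A i1 i2 p j 2 * x$2)" for x
    unfolding vec_eq_iff
  proof
    fix j
    show "(G p A x + \<phi> (G p A x)) $ j = (\<chi> j. if j = i1 \<or> j = i2 then G p A x $ j
        else reduced_lin A i1 i2 p j 1 * x$1 + reduced_lin A i1 i2 p j 2 * x$2) $ j"
    proof (cases "j = i1 \<or> j = i2")
      case True
      then show ?thesis unfolding \<phi>_def by auto
    next
      case False
      have "A$j$c = ?r1 j * A$i1$c + ?r2 j * A$i2$c" for c by (rule row_eq_row_coeff[OF assms])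
      with False show ?thesis unfolding \<phi>_def reduced_lin_def by (simp add: G_nth algebra_simps)
    qed
  qed
qed

lemma G_poly_equivalent_quad_lin:
  fixes A :: "real^2^'l"
  assumes minor: "minor2 A i1 i2 \<noteq> 0"
  obtains u1 u2 c1 v1 v2 c2 where
    "poly_equivalent (G p A)
       (quad_lin_map i1 i2 (\<lambda>x. (x$1)\<^sup>2 + u1 * x$1 + u2 * x$2 + c1)
          (\<lambda>x. (x$2)\<^sup>2 + v1 * x$1 + v2 * x$2 + c2)
          (\<lambda>j. reduced_lin A i1 i2 p j 1) (\<lambda>j. reduced_lin A i1 i2 p j 2))"
proof -
  define D where "D = minor2 A i1 i2"
  define a1 a2 b1 b2 where "a1 = A$i1$1" and "a2 = A$i1$2" and "b1 = A$i2$1" and "b2 = A$i2$2"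
  have D: "D \<noteq> 0" "D = a1 * b2 - a2 * b1"
    using minor unfolding D_def minor2_def a1_def a2_def b1_def b2_def by simp_all
  have "i1 \<noteq> i2" using minor unfolding minor2_def by auto
  define u1 u2 c1 where "u1 = (b2 * G_lin A p i1 1 - a2 * G_lin A p i2 1) / D"
    and "u2 = (b2 * G_lin A p i1 2 - a2 * G_lin A p i2 2) / D"
    and "c1 = (b2 * G_const A p i1 - a2 * G_const A p i2) / D"
  define v1 v2 c2 where "v1 = (a1 * G_lin A p i2 1 - b1 * G_lin A p i1 1) / D"
    and "v2 = (a1 * G_lin A p i2 2 - b1 * G_lin A p i1 2) / D"
    and "c2 = (a1 * G_const A p i2 - b1 * G_const A p i1) / D"
  have "poly_equivalent (G p A) (\<lambda>x. \<chi> j. if j = i1 \<or> j = i2 then G p A x $ j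
           else reduced_lin A i1 i2 p j 1 * x$1 + reduced_lin A i1 i2 p j 2 * x$2)"
    by (rule G_poly_equivalent_reduced[OF minor])
  also have "poly_equivalent \<dots>
       (quad_lin_map i1 i2 (\<lambda>x. (x$1)\<^sup>2 + u1 * x$1 + u2 * x$2 + c1)
          (\<lambda>x. (x$2)\<^sup>2 + v1 * x$1 + v2 * x$2 + c2)
          (\<lambda>j. reduced_lin A i1 i2 p j 1) (\<lambda>j. reduced_lin A i1 i2 p j 2))"
  proof (rule poly_equivalent_target)
    have "b2 / D * (a1 / D) - - a2 / D * (- b1 / D) = 1 / D"
      using D(1) by (simp add: field_simps power2_eq_square) (simp add: D(2) algebra_simps)
    then show "poly_automorphism (coord_pair_linear i1 i2 (b2 / D) (- a2 / D) (- b1 / D) (a1 / D))"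
      using D \<open>i1 \<noteq> i2\<close> by (intro poly_automorphism_coord_pair_linear) simp_all
    fix x
    have g: "G p A x $ i1 =
        a1 * (x$1)\<^sup>2 + a2 * (x$2)\<^sup>2 + G_lin A p i1 1 * x$1 + G_lin A p i1 2 * x$2 + G_const A p i1"
      "G p A x $ i2 =
        b1 * (x$1)\<^sup>2 + b2 * (x$2)\<^sup>2 + G_lin A p i2 1 * x$1 + G_lin A p i2 2 * x$2 + G_const A p i2"
      unfolding G_nth a1_def a2_def b1_def b2_def by simp_all
    have "b2 / D * G p A x $ i1 + - a2 / D * G p A x $ i2 = (x$1)\<^sup>2 + u1 * x$1 + u2 * x$2 + c1"
      "- b1 / D * G p A x $ i1 + a1 / D * G p A x $ i2 = (x$2)\<^sup>2 + v1 * x$1 + v2 * x$2 + c2"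
      unfolding g u1_def u2_def c1_def v1_def v2_def c2_def using D(1)
      by (simp_all add: field_simps) (simp_all add: D(2) algebra_simps)
    then show "coord_pair_linear i1 i2 (b2 / D) (- a2 / D) (- b1 / D) (a1 / D)
        (\<chi> j. if j = i1 \<or> j = i2 then G p A x $ j
           else reduced_lin A i1 i2 p j 1 * x$1 + reduced_lin A i1 i2 p j 2 * x$2) =
      quad_lin_map i1 i2 (\<lambda>x. (x$1)\<^sup>2 + u1 * x$1 + u2 * x$2 + c1)
          (\<lambda>x. (x$2)\<^sup>2 + v1 * x$1 + v2 * x$2 + c2)
          (\<lambda>j. reduced_lin A i1 i2 p j 1) (\<lambda>j. reduced_lin A i1 i2 p j 2) x"
      unfolding vec_eq_iff coord_pair_linear_def quad_lin_map_def using \<open>i1 \<noteq> i2\<close> by auto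
  qed
  finally show ?thesis by (rule that)
qed

lemma rank_ge_2_imp_minor2_nonzero:
  fixes A :: "real^2^'l"
  assumes "2 \<le> rank A"
  obtains i1 i2 where "minor2 A i1 i2 \<noteq> 0"
proof (rule ccontr)
  assume "\<not> thesis"
  with that have minor: "minor2 A i1 i2 = 0" for i1 i2 by blast
  obtain i0 where i0: "\<And>i. A$i \<noteq> 0 \<Longrightarrow> A$i0 \<noteq> 0" by blast
  have "rows A \<subseteq> span {A$i0}"
  proof
    fix r assume "r \<in> rows A"
    then obtain i where r: "r = row i A" by (auto simp: rows_def)
    have "\<exists>t. \<forall>c. A$i$c = t * A$i0$c"
    proof (cases "A$i0 = 0")
      case True
      with i0 have "A$i = 0" by blast
      then show ?thesis by simp
    next
      case False
      then obtain c0 where c0: "A$i0$c0 \<noteq> 0" by (auto simp: vec_eq_iff)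
      have m: "A$i0$1 * A$i$2 = A$i0$2 * A$i$1" using minor[of i0 i] by (simp add: minor2_def)
      have "A$i$c = A$i$c0 / A$i0$c0 * A$i0$c" for c
      proof (cases "c = c0")
        case False
        then have "c0 = 1 \<and> c = 2 \<or> c0 = 2 \<and> c = 1" using exhaust_2[of c] exhaust_2[of c0] by auto
        then show ?thesis using c0 m by (auto simp: field_simps)
      qed (use c0 in simp)
      then show ?thesis by blast
    qed
    then obtain t where "\<forall>c. A$i$c = t * A$i0$c" by blast
    then have "r = t *\<^sub>R A$i0" unfolding r vec_eq_iff row_def by simp
    then show "r \<in> span {A$i0}" by (simp add: span_base span_mul)
  qed
  then have "dim (rows A) \<le> card {A$i0}" by (rule dim_le_card) simp
  with assms show False by (simp add: row_rank_def)
qed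

lemma proper_algebraic_set_zero_set:
  assumes "f \<in> poly_funs" and "f x \<noteq> 0"
  shows "proper_algebraic_set {x. f x = 0}"
  unfolding proper_algebraic_set_def algebraic_set_def
  using assms by (auto intro!: exI[of _ "{f}"])

lemma obtain_not_in_if_card_less:
  assumes "card (S::'l::finite set) < CARD('l)"
  obtains k where "k \<notin> S"
proof -
  have "\<not> UNIV \<subseteq> S"
  proof
    assume "UNIV \<subseteq> S"
    then have "CARD('l) \<le> card S" by (simp add: card_mono)
    with assms show False by simp
  qed
  then show ?thesis using that by blast
qed

lemma G_generic_cross_cap:
  fixes A :: "real^2^'l::finite"
  assumes card: "CARD('l) = 3" and nz: "\<forall>i c. A$i$c \<noteq> 0" and minor: "minor2 A i1 i2 \<noteq> 0"
    and e: "distinct [e1, e2, e3]"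
  shows "\<exists>\<Sigma>. proper_algebraic_set \<Sigma> \<and>
           (\<forall>p. p \<notin> \<Sigma> \<longrightarrow> poly_equivalent (G p A) (cross_cap e1 e2 e3))"
proof -
  have "i1 \<noteq> i2" using minor unfolding minor2_def by auto
  then have "card {i1, i2} < CARD('l)" using card by simp
  then obtain k where "k \<notin> {i1, i2}" by (rule obtain_not_in_if_card_less)
  with \<open>i1 \<noteq> i2\<close> have dist: "distinct [i1, i2, k]" by auto
  then have U: "UNIV = {i1, i2, k}"
    using card by (intro card_subset_eq[symmetric]) (auto simp: card_insert_if)
  define f where "f p = reduced_lin A i1 i2 p k 1 * reduced_lin A i1 i2 p k 2" for p
  define p0 :: "real^2^'l" where "p0 = (\<chi> i. if i = k then vector [1, 1] else 0)"
  have "f p0 = (- 2 * A$k$1) * (- 2 * A$k$2)"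
    using dist unfolding f_def by (simp add: reduced_lin_eq p0_def)
  with nz have "f p0 \<noteq> 0" by simp
  moreover have "f \<in> poly_funs"
    unfolding f_def by (intro poly_funs.mult poly_funs_reduced_lin)
  moreover have "poly_equivalent (G p A) (cross_cap e1 e2 e3)" if "f p \<noteq> 0" for p
  proof -
    obtain u1 u2 c1 v1 v2 c2 where "poly_equivalent (G p A)
       (quad_lin_map i1 i2 (\<lambda>x. (x$1)\<^sup>2 + u1 * x$1 + u2 * x$2 + c1)
          (\<lambda>x. (x$2)\<^sup>2 + v1 * x$1 + v2 * x$2 + c2)
          (\<lambda>j. reduced_lin A i1 i2 p j 1) (\<lambda>j. reduced_lin A i1 i2 p j 2))"
      using G_poly_equivalent_quad_lin[OF minor] by blast
    also have "poly_equivalent \<dots> (cross_cap k i2 i1)"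
      using that unfolding f_def by (intro quad_lin_map_cross_cap[OF dist U]) simp_all
    also have "poly_equivalent \<dots> (cross_cap e1 e2 e3)"
      using dist e by (intro three_component_map_relabel) auto
    finally show ?thesis .
  qed
  ultimately show ?thesis
    by (intro exI[of _ "{p. f p = 0}"]) (auto intro: proper_algebraic_set_zero_set)
qed

lemma G_generic_embedding:
  fixes A :: "real^2^'l::finite"
  assumes card: "CARD('l) \<ge> 4" and nz: "\<forall>i c. A$i$c \<noteq> 0" and minor: "minor2 A i1 i2 \<noteq> 0"
    and e: "distinct [e1, e2, e3]"
  shows "\<exists>\<Sigma>. proper_algebraic_set \<Sigma> \<and>
           (\<forall>p. p \<notin> \<Sigma> \<longrightarrow> poly_equivalent (G p A) (plane_embedding e1 e2 e3))"
proof -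
  have "i1 \<noteq> i2" using minor unfolding minor2_def by auto
  have "card {i1, i2} < CARD('l)" using card by (simp add: card_insert_if)
  then obtain k where "k \<notin> {i1, i2}" by (rule obtain_not_in_if_card_less)
  have "card {i1, i2, k} < CARD('l)" using card by (simp add: card_insert_if)
  then obtain k' where "k' \<notin> {i1, i2, k}" by (rule obtain_not_in_if_card_less)
  with \<open>i1 \<noteq> i2\<close> \<open>k \<notin> {i1, i2}\<close> have dist: "distinct [i1, i2, k, k']" by auto
  then have "k' \<noteq> k" "k \<noteq> i1" "k \<noteq> i2" "k' \<noteq> i1" "k' \<noteq> i2" by auto
  let ?\<alpha> = "\<lambda>p j. reduced_lin A i1 i2 p j 1" and ?\<beta> = "\<lambda>p j. reduced_lin A i1 i2 p j 2"
  define f where "f p = ?\<alpha> p k * ?\<beta> p k' - ?\<beta> p k * ?\<alpha> p k'" for p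
  define p0 :: "real^2^'l" where
    "p0 = (\<chi> i. if i = k then vector [1, 0] else if i = k' then vector [0, 1] else 0)"
  have "f p0 = (- 2 * A$k$1) * (- 2 * A$k'$2)"
    using \<open>k' \<noteq> k\<close> \<open>k \<noteq> i1\<close> \<open>k \<noteq> i2\<close> \<open>k' \<noteq> i1\<close> \<open>k' \<noteq> i2\<close>
    unfolding f_def by (simp add: reduced_lin_eq p0_def)
  with nz have "f p0 \<noteq> 0" by simp
  moreover have "f \<in> poly_funs"
    unfolding f_def by (intro poly_funs_diff poly_funs.mult poly_funs_reduced_lin)
  moreover have "poly_equivalent (G p A) (plane_embedding e1 e2 e3)" if "f p \<noteq> 0" for p
  proof -
    obtain u1 u2 c1 v1 v2 c2 where "poly_equivalent (G p A)
       (quad_lin_map i1 i2 (\<lambda>x. (x$1)\<^sup>2 + u1 * x$1 + u2 * x$2 + c1)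
          (\<lambda>x. (x$2)\<^sup>2 + v1 * x$1 + v2 * x$2 + c2) (?\<alpha> p) (?\<beta> p))"
      using G_poly_equivalent_quad_lin[OF minor] by blast
    also have "poly_equivalent \<dots> (plane_embedding k k' i1)"
      using that unfolding f_def
      by (intro quad_lin_map_embedding[OF _ _ dist]) (auto intro!: poly_funs_intros)
    also have "poly_equivalent \<dots> (plane_embedding e1 e2 e3)"
      using dist e by (intro three_component_map_relabel) auto
    finally show ?thesis .
  qed
  ultimately show ?thesis
    by (intro exI[of _ "{p. f p = 0}"]) (auto intro: proper_algebraic_set_zero_set)
qed

definition normal_form :: "'l::finite \<Rightarrow> 'l \<Rightarrow> 'l \<Rightarrow> real^2 \<Rightarrow> real^'l" where
  "normal_form e1 e2 e3 =
     (if CARD('l) = 3 then cross_cap e1 e2 e3 else plane_embedding e1 e2 e3)"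

lemma G_generic_normal_form:
  fixes A :: "real^2^'l::finite"
  assumes "CARD('l) \<ge> 3" and "\<forall>i c. A$i$c \<noteq> 0" and "2 \<le> rank A" and "distinct [e1, e2, e3]"
  shows "\<exists>\<Sigma>. proper_algebraic_set \<Sigma> \<and>
           (\<forall>p. p \<notin> \<Sigma> \<longrightarrow> poly_equivalent (G p A) (normal_form e1 e2 e3))"
proof -
  obtain i1 i2 where minor: "minor2 A i1 i2 \<noteq> 0"
    using rank_ge_2_imp_minor2_nonzero[OF assms(3)] .
  show ?thesis
  proof (cases "CARD('l) = 3")
    case True
    then show ?thesis
      using G_generic_cross_cap[OF True assms(2) minor assms(4)] by (simp add: normal_form_def)
  next
    case False
    with assms(1) have "CARD('l) \<ge> 4" by simp
    with False show ?thesis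
      using G_generic_embedding[OF _ assms(2) minor assms(4)] by (simp add: normal_form_def)
  qed
qed

theorem corollary2p1:
  fixes A B :: "real^2^'l::finite"
  assumes "CARD('l) \<ge> 3"
    and "\<forall>i j. A$i$j \<noteq> 0" and "\<forall>i j. B$i$j \<noteq> 0"
    and "rank A = 2" and "rank B = 2"
  shows "\<exists>\<Sigma>A \<Sigma>B :: (real^2^'l) set.
           proper_algebraic_set \<Sigma>A \<and> proper_algebraic_set \<Sigma>B \<and>
           (\<forall>p q. p \<notin> \<Sigma>A \<and> q \<notin> \<Sigma>B \<longrightarrow> A_equivalent (G p A) (G q B))"
proof -
  obtain T :: "'l set" where "card T = 3"
    using assms(1) obtain_subset_with_card_n[of 3 "UNIV :: 'l set"] by auto
  then obtain e1 e2 e3 :: 'l where e: "distinct [e1, e2, e3]"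
    unfolding card_3_iff by auto
  obtain \<Sigma>A where "proper_algebraic_set \<Sigma>A"
    and \<Sigma>A: "\<And>p. p \<notin> \<Sigma>A \<Longrightarrow> poly_equivalent (G p A) (normal_form e1 e2 e3)"
    using G_generic_normal_form[OF assms(1,2) _ e] assms(4) by auto
  obtain \<Sigma>B where "proper_algebraic_set \<Sigma>B"
    and \<Sigma>B: "\<And>q. q \<notin> \<Sigma>B \<Longrightarrow> poly_equivalent (G q B) (normal_form e1 e2 e3)"
    using G_generic_normal_form[OF assms(1,3) _ e] assms(5) by auto
  have "A_equivalent (G p A) (G q B)" if "p \<notin> \<Sigma>A" "q \<notin> \<Sigma>B" for p q
    using poly_equivalent_trans[OF \<Sigma>A[OF that(1)] poly_equivalent_sym[OF \<Sigma>B[OF that(2)]]]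
    by (rule poly_equivalent_imp_A_equivalent)
  with \<open>proper_algebraic_set \<Sigma>A\<close> \<open>proper_algebraic_set \<Sigma>B\<close> show ?thesis by blast
qed

end
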